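(* Let $V,Y$ be real Banach spaces with $V\hookrightarrow Y$ continuously and densely, $U\subset V$ open, $m\in\mathbb{N}$, $\mathcal{G}\colon U\to\mathbb{R}^m$ analytic, $\mathcal{M}=\{u\in U\mid\mathcal{G}(u)=0\}$, and $\bar u\in U$. Assume: for every $u\in U$ the operator $\mathcal{G}'(u)$ extends to $\overline{\mathcal{G}'(u)}\in\mathcal{L}(Y,\mathbb{R}^m)$ and $u\mapsto\overline{\mathcal{G}'(u)}$ is analytic $U\to\mathcal{L}(Y,\mathbb{R}^m)$; and $\mathcal{G}(\bar u)=0$ with $\mathcal{G}'(\bar u)\colon V\to\mathbb{R}^m$ surjective. Let $V_0=\ker\mathcal{G}'(\bar u)$, let $V_1$ be a closed subspace with $V=V_0\oplus V_1$, let $\Omega_0\subset V_0$, $\Omega_1\subset V_1$ be open with $\bar u\in\Omega:=\Omega_0+\Omega_1\subset U$, and let $\psi\colon\Omega_0\to V$ be analytic with $\psi(\Omega_0)\subset\Omega_1$, $\mathcal{M}\cap\Omega=\{\omega+\psi(\omega)\mid\omega\in\Omega_0\}$, and such that $\mathcal{G}'(u)|_{V_1}\colon V_1\to\mathbb{R}^m$ is an isomorphism for all $u\in\Omega$. Put $\varphi(\omega)=\omega+\psi(\omega)$. Then for every $\omega\in\Omega_0$ and $u=\varphi(\omega)$: (i) $\mathcal{T}_u\mathcal{M}=\ker\mathcal{G}'(u)=\operatorname{Im}\varphi'(\omega)$; (ii) $\overline{\mathcal{T}_u\mathcal{M}}=\ker\overline{\mathcal{G}'(u)}$, where the closure is taken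 in the norm of $Y$; (iii) $\operatorname{codim}(\mathcal{T}_u\mathcal{M},V)=\operatorname{codim}(\overline{\mathcal{T}_u\mathcal{M}},Y)=m$.
   Context: The tangent space is $\mathcal{T}_u\mathcal{M}=\{\gamma'(0)\mid\gamma\in C^1((-\varepsilon,\varepsilon);V),\ \gamma(t)\in\mathcal{M}\cap\Omega\ \forall t,\ \gamma(0)=u\}$. Analytic means locally given by norm-convergent power series of continuous multilinear maps. *)

theory Defs
  imports "HOL-Analysis.Analysis"
begin

text \<open>k-linear maps with all arguments restricted to a subspace E; an argument
  tuple is a function nat => 'a of which only the first k entries matter.\<close>
definition multilinear_on :: "'a::real_vector set \<Rightarrow> nat \<Rightarrow> ((nat \<Rightarrow> 'a) \<Rightarrow> 'b::real_vector) \<Rightarrow> bool" where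
  "multilinear_on E k A \<longleftrightarrow>
     (\<forall>x y. (\<forall>j<k. x j = y j) \<longrightarrow> A x = A y) \<and>
     (\<forall>i<k. \<forall>x. (\<forall>j<k. x j \<in> E) \<longrightarrow>
        (\<forall>a\<in>E. \<forall>b\<in>E. \<forall>c::real. A (x(i := c *\<^sub>R a + b)) = c *\<^sub>R A (x(i := a)) + A (x(i := b))))"

definition mbounded_by :: "'a::real_normed_vector set \<Rightarrow> nat \<Rightarrow> ((nat \<Rightarrow> 'a) \<Rightarrow> 'b::real_normed_vector) \<Rightarrow> real \<Rightarrow> bool" where
  "mbounded_by E k A C \<longleftrightarrow> (\<forall>x. (\<forall>j<k. x j \<in> E) \<longrightarrow> norm (A x) \<le> C * (\<Prod>j<k. norm (x j)))"

definition bounded_multilinear_on :: "'a::real_normed_vector set \<Rightarrow> nat \<Rightarrow> ((nat \<Rightarrow> 'a) \<Rightarrow> 'b::real_normed_vector) \<Rightarrow> bool" where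
  "bounded_multilinear_on E k A \<longleftrightarrow> multilinear_on E k A \<and> (\<exists>C. mbounded_by E k A C)"

definition mnorm :: "'a::real_normed_vector set \<Rightarrow> nat \<Rightarrow> ((nat \<Rightarrow> 'a) \<Rightarrow> 'b::real_normed_vector) \<Rightarrow> real" where
  "mnorm E k A = Inf {C. C \<ge> 0 \<and> mbounded_by E k A C}"

text \<open>Analyticity on a set S contained in a closed subspace E (which is regarded as the
  Banach space of definition): locally f is given by a norm-convergent power series of
  continuous multilinear maps on E.\<close>
definition analytic_on_within :: "'a::real_normed_vector set \<Rightarrow> 'a set \<Rightarrow> ('a \<Rightarrow> 'b::real_normed_vector) \<Rightarrow> bool" where
  "analytic_on_within E S f \<longleftrightarrow>
     (\<forall>x0\<in>S. \<exists>r>0. \<exists>A :: nat \<Rightarrow> (nat \<Rightarrow> 'a) \<Rightarrow> 'b.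
        (\<forall>k. bounded_multilinear_on E k (A k)) \<and>
        summable (\<lambda>k. mnorm E k (A k) * r ^ k) \<and>
        (\<forall>h\<in>E. norm h < r \<longrightarrow> x0 + h \<in> S \<and> f (x0 + h) = (\<Sum>k. A k (\<lambda>_. h))))"

abbreviation banach_analytic_on :: "'a::real_normed_vector set \<Rightarrow> ('a \<Rightarrow> 'b::real_normed_vector) \<Rightarrow> bool" where
  "banach_analytic_on S f \<equiv> analytic_on_within UNIV S f"

definition tangent_space :: "'a::real_normed_vector set \<Rightarrow> 'a set \<Rightarrow> 'a \<Rightarrow> 'a set" where
  "tangent_space M Om u = {v. \<exists>\<epsilon>>0. \<exists>\<gamma> \<gamma>'.
      (\<forall>t\<in>{-\<epsilon><..<\<epsilon>}. (\<gamma> has_vector_derivative \<gamma>' t) (at t)) \<and>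
      continuous_on {-\<epsilon><..<\<epsilon>} \<gamma>' \<and>
      (\<forall>t\<in>{-\<epsilon><..<\<epsilon>}. \<gamma> t \<in> M \<inter> Om) \<and> \<gamma> 0 = u \<and> \<gamma>' 0 = v}"

definition has_codim :: "'a::real_vector set \<Rightarrow> nat \<Rightarrow> bool" where
  "has_codim S n \<longleftrightarrow> (\<exists>B. finite B \<and> card B = n \<and> independent B \<and>
      span B \<inter> S = {0} \<and> {x + y | x y. x \<in> S \<and> y \<in> span B} = UNIV)"

end

theory Submission
  imports Defs
begin

text \<open>
  Analyticity of \<psi> makes \<phi> differentiable on \<Omega>0, and along each line \<omega> + t a with a \<in> V0
  the curve t \<mapsto> \<phi> (\<omega> + t a) is a C1 curve in M \<inter> \<Omega> with velocity \<phi>'(\<omega>) a at t = 0, so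
  Im \<phi>'(\<omega>) lies in the tangent space. Differentiating G = 0 along curves in M puts the tangent
  space into ker G'(u). Conversely, \<psi> takes values in V1, hence \<phi>'(\<omega>) a - a \<in> V1; writing
  v \<in> ker G'(u) as a + b with a \<in> V0, b \<in> V1, the vector v - \<phi>'(\<omega>) a lies in V1 \<inter> ker G'(u),
  which is trivial because G'(u) is injective on V1.

  For the codimension, a linear right inverse L of the surjection G'(u) onto the m-dimensional
  space spans a complement of its kernel. For the closure, the continuous map y \<mapsto> y - J (L (B y)),
  with B the extension of G'(u) to Y, sends the dense range of J into J (ker G'(u)) and fixes ker B.
\<close>

section \<open>Continuous multilinear maps\<close>

lemma multilinear_on_cong:
  assumes "multilinear_on E k A" "\<And>j. j < k \<Longrightarrow> x j = y j"
  shows "A x = A y"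
  using assms unfolding multilinear_on_def by blast

lemma multilinear_on_linear_arg:
  assumes "multilinear_on E k A" "i < k" "\<And>j. j < k \<Longrightarrow> x j \<in> E" "a \<in> E" "b \<in> E"
  shows "A (x(i := c *\<^sub>R a + b)) = c *\<^sub>R A (x(i := a)) + A (x(i := b))"
  using assms unfolding multilinear_on_def by blast

lemma multilinear_on_diag_scaleR:
  assumes E: "subspace E" and A: "multilinear_on E k A" and h: "h \<in> E"
  shows "A (\<lambda>_. t *\<^sub>R h) = t ^ k *\<^sub>R A (\<lambda>_. h)"
proof -
  have "0 \<in> E" "t *\<^sub>R h \<in> E" using E h by (auto intro: subspace_0 subspace_scale)
  have scale_arg: "A (x(i := t *\<^sub>R h)) = t *\<^sub>R A (x(i := h))"
    if "i < k" "\<And>j. j < k \<Longrightarrow> x j \<in> E" for i x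
  proof -
    have "A (x(i := 1 *\<^sub>R 0 + 0)) = 1 *\<^sub>R A (x(i := 0)) + A (x(i := 0))"
      by (rule multilinear_on_linear_arg[OF A that \<open>0 \<in> E\<close> \<open>0 \<in> E\<close>])
    then have "A (x(i := 0)) = 0" by simp
    moreover have "A (x(i := t *\<^sub>R h + 0)) = t *\<^sub>R A (x(i := h)) + A (x(i := 0))"
      by (rule multilinear_on_linear_arg[OF A that h \<open>0 \<in> E\<close>])
    ultimately show ?thesis by simp
  qed
  define y where "y i = (\<lambda>j. if j < i then t *\<^sub>R h else h)" for i :: nat
  have "A (y i) = t ^ i *\<^sub>R A (y 0)" if "i \<le> k" for i
    using that
  proof (induction i)
    case (Suc i)
    have "A ((y i)(i := t *\<^sub>R h)) = t *\<^sub>R A ((y i)(i := h))"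
      using Suc.prems h \<open>t *\<^sub>R h \<in> E\<close> by (intro scale_arg) (auto simp: y_def)
    moreover have "(y i)(i := t *\<^sub>R h) = y (Suc i)" "(y i)(i := h) = y i"
      by (auto simp: y_def)
    ultimately have "A (y (Suc i)) = t *\<^sub>R A (y i)" by simp
    then show ?case using Suc by simp
  qed simp
  moreover have "A (\<lambda>_. t *\<^sub>R h) = A (y k)"
    by (rule multilinear_on_cong[OF A]) (simp add: y_def)
  ultimately show ?thesis by (simp add: y_def)
qed

lemma mbounded_by_mnorm:
  assumes "bounded_multilinear_on E k A"
  shows "mbounded_by E k A (mnorm E k A)" and "0 \<le> mnorm E k A"
proof -
  define S where "S = {C. C \<ge> 0 \<and> mbounded_by E k A C}"
  obtain C where C: "mbounded_by E k A C"
    using assms unfolding bounded_multilinear_on_def by blast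
  then have "mbounded_by E k A (max C 0)"
    unfolding mbounded_by_def
    by (meson max.cobounded1 mult_right_mono order_trans norm_ge_zero prod_nonneg)
  then have "max C 0 \<in> S" by (simp add: S_def)
  then have "S \<noteq> {}" by blast
  then show "0 \<le> mnorm E k A"
    unfolding mnorm_def S_def[symmetric] by (intro cInf_greatest) (auto simp: S_def)
  show "mbounded_by E k A (mnorm E k A)"
    unfolding mbounded_by_def
  proof (intro allI impI)
    fix x assume x: "\<forall>j<k. x j \<in> E"
    define P where "P = (\<Prod>j<k. norm (x j))"
    have bound: "norm (A x) \<le> D * P" if "D \<in> S" for D
      using that x by (auto simp: S_def mbounded_by_def P_def)
    show "norm (A x) \<le> mnorm E k A * P"
    proof (cases "P = 0")
      case True
      then show ?thesis using bound \<open>S \<noteq> {}\<close> by force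
    next
      case False
      moreover have "P \<ge> 0" by (simp add: P_def prod_nonneg)
      ultimately have "P > 0" by simp
      have "norm (A x) / P \<le> Inf S"
        using \<open>S \<noteq> {}\<close> bound \<open>P > 0\<close> by (intro cInf_greatest) (auto simp: divide_le_eq)
      then show ?thesis
        using \<open>P > 0\<close> by (simp add: mnorm_def S_def divide_le_eq mult.commute)
    qed
  qed
qed

lemma norm_diag_le_mnorm:
  assumes "bounded_multilinear_on E k A" "h \<in> E"
  shows "norm (A (\<lambda>_. h)) \<le> mnorm E k A * norm h ^ k"
  using mbounded_by_mnorm(1)[OF assms(1), unfolded mbounded_by_def, rule_format, of "\<lambda>_. h"] assms(2)
  by simp

lemma bounded_linear_multilinear_on_1:
  assumes E: "subspace E" and A: "bounded_multilinear_on E 1 A"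
    and P: "bounded_linear P" and PE: "\<And>v. P v \<in> E"
  shows "bounded_linear (\<lambda>v. A (\<lambda>_. P v))"
proof -
  have ml: "multilinear_on E 1 A" using A by (simp add: bounded_multilinear_on_def)
  have diag: "A ((\<lambda>_. a)(0 := b)) = A (\<lambda>_. b)" for a b
    by (rule multilinear_on_cong[OF ml]) simp
  obtain K where K: "\<And>v. norm (P v) \<le> norm v * K" using bounded_linear.bounded[OF P] by blast
  show ?thesis
  proof (rule bounded_linear_intro[where K = "mnorm E 1 A * K"])
    fix u v
    have "A ((\<lambda>_. P u)(0 := 1 *\<^sub>R P u + P v))
        = 1 *\<^sub>R A ((\<lambda>_. P u)(0 := P u)) + A ((\<lambda>_. P u)(0 := P v))"
      using PE by (intro multilinear_on_linear_arg[OF ml]) auto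
    then show "A (\<lambda>_. P (u + v)) = A (\<lambda>_. P u) + A (\<lambda>_. P v)"
      by (simp add: diag linear_add[OF bounded_linear.linear[OF P]])
  next
    fix c u
    show "A (\<lambda>_. P (c *\<^sub>R u)) = c *\<^sub>R A (\<lambda>_. P u)"
      using multilinear_on_diag_scaleR[OF E ml PE, of c]
      by (simp add: linear_scale[OF bounded_linear.linear[OF P]])
  next
    fix u
    have "norm (A (\<lambda>_. P u)) \<le> mnorm E 1 A * norm (P u)"
      using norm_diag_le_mnorm[OF A PE] by simp
    also have "\<dots> \<le> mnorm E 1 A * (norm u * K)"
      by (intro mult_left_mono K mbounded_by_mnorm(2)[OF A])
    finally show "norm (A (\<lambda>_. P u)) \<le> norm u * (mnorm E 1 A * K)"
      by (simp add: mult_ac)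
  qed
qed

section \<open>Differentiability of analytic maps\<close>

lemma has_derivative_quadratic_remainder:
  assumes D: "bounded_linear D" and r: "r > 0"
    and rem: "\<And>y. y \<in> S \<Longrightarrow> norm (y - x) < r \<Longrightarrow> norm (f y - f x - D (y - x)) \<le> C * norm (y - x) ^ 2"
  shows "(f has_derivative D) (at x within S)"
  unfolding has_derivative_within_alt
proof (intro conjI D allI impI)
  fix e :: real assume e: "e > 0"
  define d where "d = min r (e / (\<bar>C\<bar> + 1))"
  have "d > 0" using r e by (simp add: d_def)
  moreover have "norm (f y - f x - D (y - x)) \<le> e * norm (y - x)"
    if y: "y \<in> S" "norm (y - x) < d" for y
  proof -
    let ?n = "norm (y - x)"
    have "?n * (\<bar>C\<bar> + 1) \<le> e"
      using y(2) by (simp add: d_def pos_less_divide_eq less_imp_le)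
    then have "?n + \<bar>C\<bar> * ?n \<le> e" by (simp add: algebra_simps)
    then have "\<bar>C\<bar> * ?n \<le> e" using norm_ge_zero[of "y - x"] by linarith
    then have "\<bar>C\<bar> * ?n * ?n \<le> e * ?n" by (simp add: mult_right_mono)
    moreover have "C * ?n ^ 2 \<le> \<bar>C\<bar> * ?n * ?n"
      using mult_right_mono[of C "\<bar>C\<bar>" "?n * ?n"] by (simp add: power2_eq_square mult.assoc)
    ultimately have "C * ?n ^ 2 \<le> e * ?n" by linarith
    moreover have "?n < r" using y(2) by (simp add: d_def)
    ultimately show ?thesis using rem[OF y(1)] by fastforce
  qed
  ultimately show "\<exists>d>0. \<forall>y\<in>S. norm (y - x) < d \<longrightarrow> norm (f y - f x - D (y - x)) \<le> e * norm (y - x)"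
    by blast
qed

text \<open>A 0 is 0-linear, i.e. constant, so the right-hand side does not depend on h.\<close>

lemma multilinear_series_at_zero:
  fixes A :: "nat \<Rightarrow> (nat \<Rightarrow> 'a::real_vector) \<Rightarrow> 'b::real_normed_vector"
  assumes E: "subspace E" and A: "\<And>k. multilinear_on E k (A k)"
  shows "(\<Sum>k. A k (\<lambda>_. 0)) = A 0 (\<lambda>_. h)"
proof -
  have "A k (\<lambda>_. 0) = 0" if "k \<noteq> 0" for k
  proof -
    have "A k (\<lambda>_. (0::real) *\<^sub>R 0) = 0 ^ k *\<^sub>R A k (\<lambda>_. 0)"
      by (rule multilinear_on_diag_scaleR[OF E A subspace_0[OF E]])
    then show ?thesis using that by (simp add: zero_power)
  qed
  then have "(\<lambda>k. A k (\<lambda>_. 0)) = (\<lambda>k. if k = 0 then A 0 (\<lambda>_. 0) else 0)"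
    by auto
  then have "(\<lambda>k. A k (\<lambda>_. 0)) sums A 0 (\<lambda>_. 0)"
    using sums_single[of 0 "\<lambda>_. A 0 (\<lambda>_. 0)"] by simp
  then have "(\<Sum>k. A k (\<lambda>_. 0)) = A 0 (\<lambda>_. 0)" by (simp add: sums_iff)
  also have "\<dots> = A 0 (\<lambda>_. h)"
    by (rule multilinear_on_cong[OF A]) simp
  finally show ?thesis .
qed

lemma multilinear_series_quadratic_remainder:
  fixes A :: "nat \<Rightarrow> (nat \<Rightarrow> 'a::real_normed_vector) \<Rightarrow> 'b::banach"
  assumes r: "r > 0" and A: "\<And>k. bounded_multilinear_on E k (A k)"
    and sm: "summable (\<lambda>k. mnorm E k (A k) * r ^ k)"
    and h: "h \<in> E" "norm h < r"
  shows "norm ((\<Sum>k. A k (\<lambda>_. h)) - A 0 (\<lambda>_. h) - A 1 (\<lambda>_. h))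
           \<le> (\<Sum>k. mnorm E (k + 2) (A (k + 2)) * r ^ k) * norm h ^ 2"
proof -
  define m where "m k = mnorm E (k + 2) (A (k + 2)) * r ^ k" for k
  have "summable (\<lambda>k. mnorm E (k + 2) (A (k + 2)) * r ^ (k + 2) / r ^ 2)"
    using summable_divide[OF summable_ignore_initial_segment[OF sm, of 2]] by simp
  moreover have "(\<lambda>k. mnorm E (k + 2) (A (k + 2)) * r ^ (k + 2) / r ^ 2) = m"
    using r by (simp add: m_def fun_eq_iff power_add power2_eq_square)
  ultimately have sm_m: "summable m" by (simp only:)
  have term_le: "norm (A (k + 2) (\<lambda>_. h)) \<le> norm h ^ 2 * m k" for k
  proof -
    have "norm (A (k + 2) (\<lambda>_. h)) \<le> mnorm E (k + 2) (A (k + 2)) * (norm h ^ 2 * norm h ^ k)"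
      using norm_diag_le_mnorm[OF A h(1), of "k + 2"] by (simp only: power_add mult.commute)
    also have "\<dots> \<le> mnorm E (k + 2) (A (k + 2)) * (norm h ^ 2 * r ^ k)"
      using h(2) by (intro mult_left_mono mbounded_by_mnorm(2)[OF A] power_mono) auto
    finally show ?thesis by (simp add: m_def mult_ac)
  qed
  have sm_tail: "summable (\<lambda>k. norm (A (k + 2) (\<lambda>_. h)))"
    by (rule summable_comparison_test'[OF summable_mult[OF sm_m]]) (use term_le in simp)
  then have "summable (\<lambda>k. A (k + 2) (\<lambda>_. h))" by (rule summable_norm_cancel)
  then have "summable (\<lambda>k. A k (\<lambda>_. h))" by (rule summable_iff_shift[THEN iffD1])
  then have "(\<Sum>k. A k (\<lambda>_. h)) = (\<Sum>k. A (k + 2) (\<lambda>_. h)) + (\<Sum>i<2. A i (\<lambda>_. h))"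
    by (rule suminf_split_initial_segment)
  then have "(\<Sum>k. A k (\<lambda>_. h)) - A 0 (\<lambda>_. h) - A 1 (\<lambda>_. h) = (\<Sum>k. A (k + 2) (\<lambda>_. h))"
    by (simp add: eval_nat_numeral)
  also have "norm \<dots> \<le> (\<Sum>k. norm h ^ 2 * m k)"
    using summable_norm[OF sm_tail] suminf_le[OF term_le sm_tail summable_mult[OF sm_m]] by linarith
  also have "\<dots> = (\<Sum>k. m k) * norm h ^ 2"
    using suminf_mult[OF sm_m, of "norm h ^ 2"] by (simp add: mult.commute)
  finally show ?thesis by (simp add: m_def)
qed

text \<open>
  The first-order term of the expansion is only controlled on E; the bounded projection P onto E
  extends it to a bounded linear map on the whole space.
\<close>

lemma analytic_on_within_differentiable:
  fixes f :: "'a::real_normed_vector \<Rightarrow> 'b::banach"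
  assumes an: "analytic_on_within E S f" and E: "subspace E" and SE: "S \<subseteq> E" and x: "x \<in> S"
    and P: "bounded_linear P" and PE: "\<And>v. P v \<in> E" and P_id: "\<And>v. v \<in> E \<Longrightarrow> P v = v"
  shows "f differentiable (at x within S)"
proof -
  obtain r A where r: "r > 0" and A: "\<And>k. bounded_multilinear_on E k (A k)"
    and sm: "summable (\<lambda>k. mnorm E k (A k) * r ^ k)"
    and f: "\<forall>h\<in>E. norm h < r \<longrightarrow> x + h \<in> S \<and> f (x + h) = (\<Sum>k. A k (\<lambda>_. h))"
    using bspec[OF an[unfolded analytic_on_within_def] x] by blast
  have ml: "multilinear_on E k (A k)" for k
    using A by (simp add: bounded_multilinear_on_def)
  have "(f has_derivative (\<lambda>v. A 1 (\<lambda>_. P v))) (at x within S)"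
  proof (rule has_derivative_quadratic_remainder)
    show "bounded_linear (\<lambda>v. A 1 (\<lambda>_. P v))"
      by (rule bounded_linear_multilinear_on_1[OF E A P PE])
    fix y assume "y \<in> S" and y: "norm (y - x) < r"
    then have h: "y - x \<in> E" using SE x E by (auto intro: subspace_diff)
    have "f x = A 0 (\<lambda>_. y - x)"
      using f subspace_0[OF E] r multilinear_series_at_zero[OF E ml] by auto
    then show "norm (f y - f x - A 1 (\<lambda>_. P (y - x)))
        \<le> (\<Sum>k. mnorm E (k + 2) (A (k + 2)) * r ^ k) * norm (y - x) ^ 2"
      using multilinear_series_quadratic_remainder[OF r A sm h y] f h y P_id[OF h] by auto
  qed fact
  then show ?thesis unfolding differentiable_def by blast
qed

lemma banach_analytic_on_differentiable:
  fixes f :: "'a::real_normed_vector \<Rightarrow> 'b::banach"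
  assumes "banach_analytic_on U f" "open U" "x \<in> U"
  shows "f differentiable (at x)"
  using analytic_on_within_differentiable[OF assms(1) subspace_UNIV _ assms(3) bounded_linear_ident]
    at_within_open[OF assms(3,2)] by simp

section \<open>Analytic maps along lines\<close>

text \<open>On [-R/2, R/2] the n-th term is dominated by 2/R * norm (c n) * R ^ n, because n \<le> 2 ^ n.\<close>

lemma power_series_derivative_uniform_limit:
  fixes c :: "nat \<Rightarrow> 'v::banach"
  assumes R: "R > 0" and sm: "summable (\<lambda>n. norm (c n) * R ^ n)"
  shows "uniform_limit {-R/2..R/2} (\<lambda>N t. \<Sum>n<N. (real n * t ^ (n - 1)) *\<^sub>R c n)
           (\<lambda>t. \<Sum>n. (real n * t ^ (n - 1)) *\<^sub>R c n) sequentially"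
proof (rule Weierstrass_m_test)
  show "summable (\<lambda>n. 2 / R * (norm (c n) * R ^ n))"
    using sm by (rule summable_mult)
  fix n and t :: real assume "t \<in> {-R/2..R/2}"
  then have pow: "\<bar>t\<bar> ^ (n - 1) \<le> (R/2) ^ (n - 1)" by (intro power_mono) auto
  have key: "real n * (R/2) ^ (n - 1) \<le> 2 / R * R ^ n"
  proof (cases n)
    case (Suc m)
    have "real (Suc m) \<le> 2 ^ Suc m"
      by (metis less_exp less_imp_le of_nat_le_iff of_nat_numeral of_nat_power)
    then have "real (Suc m) / 2 ^ m * R ^ m \<le> 2 * R ^ m"
      using R by (intro mult_right_mono) (auto simp: divide_le_eq)
    then show ?thesis using R Suc by (simp add: power_divide)
  qed (use R in simp)
  have "norm ((real n * t ^ (n - 1)) *\<^sub>R c n) = real n * \<bar>t\<bar> ^ (n - 1) * norm (c n)"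
    by (simp add: power_abs abs_mult)
  also have "\<dots> \<le> real n * (R/2) ^ (n - 1) * norm (c n)"
    using pow by (intro mult_right_mono mult_left_mono) auto
  also have "\<dots> \<le> 2 / R * R ^ n * norm (c n)"
    using key by (intro mult_right_mono) auto
  finally show "norm ((real n * t ^ (n - 1)) *\<^sub>R c n) \<le> 2 / R * (norm (c n) * R ^ n)"
    by (simp add: mult_ac)
qed

lemma has_vector_derivative_series:
  fixes f :: "nat \<Rightarrow> real \<Rightarrow> 'v::banach"
  assumes S: "convex S" and f: "\<And>n x. x \<in> S \<Longrightarrow> (f n has_vector_derivative f' n x) (at x within S)"
    and unif: "uniform_limit S (\<lambda>N x. \<Sum>n<N. f' n x) g' sequentially"
    and x0: "x0 \<in> S" "summable (\<lambda>n. f n x0)"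
  obtains g where "\<And>x. x \<in> S \<Longrightarrow> (\<lambda>n. f n x) sums g x"
    and "\<And>x. x \<in> S \<Longrightarrow> (g has_vector_derivative g' x) (at x within S)"
proof -
  have "\<exists>g. \<forall>x\<in>S. (\<lambda>n. f n x) sums g x \<and> (g has_derivative (\<lambda>h. h *\<^sub>R g' x)) (at x within S)"
  proof (rule has_derivative_series[where f' = "\<lambda>n x h. h *\<^sub>R f' n x"])
    show "convex S" "x0 \<in> S" "(\<lambda>n. f n x0) sums (\<Sum>n. f n x0)"
      using S x0 by (simp_all add: summable_sums)
    show "(f n has_derivative (\<lambda>h. h *\<^sub>R f' n x)) (at x within S)" if "x \<in> S" for n x
      using f[OF that] by (simp add: has_vector_derivative_def)
    show "\<forall>\<^sub>F N in sequentially. \<forall>x\<in>S. \<forall>h. norm ((\<Sum>n<N. h *\<^sub>R f' n x) - h *\<^sub>R g' x) \<le> e * norm h"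
      if "e > 0" for e
      using uniform_limitD[OF unif that]
    proof (rule eventually_mono, intro ballI allI)
      fix N x h
      assume "\<forall>x\<in>S. dist (\<Sum>n<N. f' n x) (g' x) < e" "x \<in> S"
      then have "norm ((\<Sum>n<N. f' n x) - g' x) \<le> e"
        by (auto simp: dist_norm less_imp_le)
      then have "\<bar>h\<bar> * norm ((\<Sum>n<N. f' n x) - g' x) \<le> e * \<bar>h\<bar>"
        using mult_right_mono[OF _ abs_ge_zero[of h]] by (metis mult.commute)
      then show "norm ((\<Sum>n<N. h *\<^sub>R f' n x) - h *\<^sub>R g' x) \<le> e * norm h"
        by (simp add: scaleR_sum_right[symmetric] scaleR_diff_right[symmetric])
    qed
  qed
  then show ?thesis
    by (metis that has_vector_derivative_def)
qed

lemma power_series_has_vector_derivative: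
  fixes c :: "nat \<Rightarrow> 'v::banach"
  assumes R: "R > 0" and sm: "summable (\<lambda>n. norm (c n) * R ^ n)" and t: "\<bar>t\<bar> < R/2"
  shows "((\<lambda>t. \<Sum>n. t ^ n *\<^sub>R c n) has_vector_derivative (\<Sum>n. (real n * t ^ (n - 1)) *\<^sub>R c n)) (at t)"
proof -
  define S where "S = {-R/2..R/2}"
  have S: "convex S" "0 \<in> S" using R by (simp_all add: S_def)
  have terms: "((\<lambda>t. t ^ n *\<^sub>R c n) has_vector_derivative (real n * x ^ (n - 1)) *\<^sub>R c n) (at x within S)"
    for n x
    using has_derivative_scaleR_left[OF DERIV_pow[of n x S, unfolded has_field_derivative_def], of "c n"]
    by (simp add: has_vector_derivative_def mult.commute)
  have unif: "uniform_limit S (\<lambda>N t. \<Sum>n<N. (real n * t ^ (n - 1)) *\<^sub>R c n)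
      (\<lambda>t. \<Sum>n. (real n * t ^ (n - 1)) *\<^sub>R c n) sequentially"
    unfolding S_def by (rule power_series_derivative_uniform_limit[OF R sm])
  have "(\<lambda>n. (0::real) ^ n *\<^sub>R c n) = (\<lambda>n. if n = 0 then c n else 0)"
    by (auto simp: fun_eq_iff)
  then have "summable (\<lambda>n. 0 ^ n *\<^sub>R c n)"
    using summable_single[of 0 c] by simp
  then obtain g where g: "\<And>x. x \<in> S \<Longrightarrow> (\<lambda>n. x ^ n *\<^sub>R c n) sums g x"
    and g': "\<And>x. x \<in> S \<Longrightarrow> (g has_vector_derivative (\<Sum>n. (real n * x ^ (n - 1)) *\<^sub>R c n)) (at x within S)"
    using has_vector_derivative_series[OF S(1) terms unif S(2)] by blast
  have "t \<in> interior S" using t by (auto simp: S_def)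
  then have "(g has_vector_derivative (\<Sum>n. (real n * t ^ (n - 1)) *\<^sub>R c n)) (at t)"
    using g'[OF interior_subset[THEN subsetD]] at_within_interior by metis
  then show ?thesis
    by (rule has_vector_derivative_transform_within_open[OF _ open_interior \<open>t \<in> interior S\<close>])
      (use g interior_subset sums_unique in blast)
qed

lemma power_series_derivative_continuous_on:
  fixes c :: "nat \<Rightarrow> 'v::banach"
  assumes R: "R > 0" and sm: "summable (\<lambda>n. norm (c n) * R ^ n)"
  shows "continuous_on {-R/2<..<R/2} (\<lambda>t. \<Sum>n. (real n * t ^ (n - 1)) *\<^sub>R c n)"
proof -
  have "continuous_on {-R/2..R/2} (\<lambda>t. \<Sum>n. (real n * t ^ (n - 1)) *\<^sub>R c n)"
    by (rule uniform_limit_theorem[OF _ power_series_derivative_uniform_limit[OF R sm]])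
      (simp_all add: always_eventually continuous_intros)
  then show ?thesis by (rule continuous_on_subset) auto
qed

lemma summable_multilinear_diag_coefficients:
  assumes A: "\<And>k. bounded_multilinear_on E k (A k)" and sm: "summable (\<lambda>k. mnorm E k (A k) * r ^ k)"
    and a: "a \<in> E" and R: "R \<ge> 0" and Ra: "R * norm a \<le> r"
  shows "summable (\<lambda>k. norm (A k (\<lambda>_. a)) * R ^ k)"
proof (rule summable_comparison_test'[OF sm])
  fix k
  have "norm (A k (\<lambda>_. a)) * R ^ k \<le> mnorm E k (A k) * (norm a * R) ^ k"
    using mult_right_mono[OF norm_diag_le_mnorm[OF A a], of "R ^ k"] R
    by (simp add: power_mult_distrib mult_ac)
  also have "\<dots> \<le> mnorm E k (A k) * r ^ k"
    using Ra R by (intro mult_left_mono power_mono mbounded_by_mnorm(2)[OF A]) (auto simp: mult.commute)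
  finally show "norm (norm (A k (\<lambda>_. a)) * R ^ k) \<le> mnorm E k (A k) * r ^ k"
    using R by simp
qed

lemma analytic_on_within_line:
  fixes f :: "'a::real_normed_vector \<Rightarrow> 'b::banach"
  assumes an: "analytic_on_within E S f" and E: "subspace E" and x: "x \<in> S" and a: "a \<in> E"
  obtains \<epsilon> \<gamma>' where "\<epsilon> > 0" and "\<And>t. t \<in> {-\<epsilon><..<\<epsilon>} \<Longrightarrow> x + t *\<^sub>R a \<in> S"
    and "\<And>t. t \<in> {-\<epsilon><..<\<epsilon>} \<Longrightarrow> ((\<lambda>t. f (x + t *\<^sub>R a)) has_vector_derivative \<gamma>' t) (at t)"
    and "continuous_on {-\<epsilon><..<\<epsilon>} \<gamma>'"
proof -
  obtain r A where r: "r > 0" and A: "\<And>k. bounded_multilinear_on E k (A k)"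
    and sm: "summable (\<lambda>k. mnorm E k (A k) * r ^ k)"
    and f: "\<forall>h\<in>E. norm h < r \<longrightarrow> x + h \<in> S \<and> f (x + h) = (\<Sum>k. A k (\<lambda>_. h))"
    using bspec[OF an[unfolded analytic_on_within_def] x] by blast
  have ml: "multilinear_on E k (A k)" for k
    using A by (simp add: bounded_multilinear_on_def)
  define R where "R = r / (norm a + 1)"
  define c where "c k = A k (\<lambda>_. a)" for k
  have R: "R > 0" using r by (simp add: R_def add_nonneg_pos)
  have "norm a / (norm a + 1) < 1"
    by (simp add: divide_less_eq add_nonneg_pos)
  then have "r * (norm a / (norm a + 1)) < r * 1" using r by (rule mult_strict_left_mono)
  then have Ra: "R * norm a < r" by (simp add: R_def)
  have "summable (\<lambda>k. norm (c k) * R ^ k)"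
    unfolding c_def using R Ra by (intro summable_multilinear_diag_coefficients[OF A sm a]) auto
  note series = power_series_has_vector_derivative[OF R this]
    power_series_derivative_continuous_on[OF R this]
  have line: "x + t *\<^sub>R a \<in> S \<and> f (x + t *\<^sub>R a) = (\<Sum>n. t ^ n *\<^sub>R c n)" if "\<bar>t\<bar> < R" for t
  proof -
    have "norm (t *\<^sub>R a) < r"
      using Ra mult_right_mono[of "\<bar>t\<bar>" R "norm a"] that by simp
    then show ?thesis
      using f subspace_scale[OF E a] multilinear_on_diag_scaleR[OF E ml a]
      by (simp add: c_def)
  qed
  show ?thesis
  proof
    show "R / 2 > 0" using R by simp
    show "x + t *\<^sub>R a \<in> S" if "t \<in> {-(R/2)<..<R/2}" for t
      using line that by auto
    show "((\<lambda>t. f (x + t *\<^sub>R a)) has_vector_derivative (\<Sum>n. (real n * t ^ (n - 1)) *\<^sub>R c n)) (at t)"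
      if t: "t \<in> {-(R/2)<..<R/2}" for t
    proof (rule has_vector_derivative_transform_within_open[OF _ open_greaterThanLessThan t])
      show "((\<lambda>t. \<Sum>n. t ^ n *\<^sub>R c n) has_vector_derivative (\<Sum>n. (real n * t ^ (n - 1)) *\<^sub>R c n)) (at t)"
        using series(1) t by auto
    qed (use line in auto)
  qed (use series(2) in simp)
qed

section \<open>Linear algebra of the constraint\<close>

lemma kernel_projection:
  fixes T :: "'v::real_normed_vector \<Rightarrow> 'b::euclidean_space"
  assumes T: "bounded_linear T" and V1: "subspace V1" and bij: "bij_betw T V1 UNIV"
  obtains P where "bounded_linear P" and "\<And>v. T (P v) = 0" and "\<And>v. T v = 0 \<Longrightarrow> P v = v"
    and "\<And>v. P v = 0 \<longleftrightarrow> v \<in> V1"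
proof -
  have "span V1 = V1" using V1 by (simp add: span_eq_iff)
  moreover have "T ` V1 = UNIV" using bij by (simp add: bij_betw_def)
  ultimately have "span UNIV \<subseteq> T ` span V1" by (metis subset_UNIV)
  from real_vector.linear_surj_right_inverse[OF bounded_linear.linear[OF T] this]
  obtain L where L_V1: "range L \<subseteq> span V1" and L: "linear L" and TL': "\<forall>y\<in>span UNIV. T (L y) = y"
    by blast
  have TL: "T (L y) = y" for y
    using TL' by simp
  have L_V1': "L y \<in> V1" for y
    using L_V1 \<open>span V1 = V1\<close> by auto
  show ?thesis
  proof
    show "bounded_linear (\<lambda>v. v - L (T v))"
      using T L by (intro bounded_linear_sub bounded_linear_ident bounded_linear_compose[of L T])
        (simp_all add: linear_conv_bounded_linear)
    show "T (v - L (T v)) = 0" for v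
      using TL linear_diff[OF bounded_linear.linear[OF T]] by simp
    show "T v = 0 \<Longrightarrow> v - L (T v) = v" for v
      using linear_0[OF L] by simp
    show "v - L (T v) = 0 \<longleftrightarrow> v \<in> V1" for v
    proof
      assume "v - L (T v) = 0"
      then show "v \<in> V1" using L_V1' by (metis eq_iff_diff_eq_0)
    next
      assume "v \<in> V1"
      moreover have "inj_on T V1" using bij by (simp add: bij_betw_def)
      ultimately have "L (T v) = v"
        using L_V1' TL by (metis inj_onD)
      then show "v - L (T v) = 0" by simp
    qed
  qed
qed

lemma kernel_subset_image_of_graph_derivative:
  assumes T: "linear T" and V1: "subspace V1" and inj: "inj_on T V1"
    and sum: "{a + b | a b. a \<in> V0 \<and> b \<in> V1} = UNIV"
    and TD: "\<And>a. a \<in> V0 \<Longrightarrow> T (D a) = 0" and D_V1: "\<And>a. a \<in> V0 \<Longrightarrow> D a - a \<in> V1"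
  shows "{v. T v = 0} \<subseteq> D ` V0"
proof
  fix v assume "v \<in> {v. T v = 0}"
  moreover obtain a b where v: "v = a + b" and a: "a \<in> V0" and b: "b \<in> V1"
    using sum by blast
  ultimately have "T (v - D a) = T 0"
    using TD[OF a] linear_diff[OF T] linear_0[OF T] by simp
  moreover have "v - D a \<in> V1"
    using subspace_diff[OF V1 b D_V1[OF a]] v by (simp add: algebra_simps)
  ultimately have "v - D a = 0"
    using inj subspace_0[OF V1] by (auto dest: inj_onD)
  then show "v \<in> D ` V0" using a by auto
qed

lemma has_codim_kernel:
  fixes T :: "'v::real_vector \<Rightarrow> 'b::euclidean_space"
  assumes T: "linear T" and "surj T"
  shows "has_codim {v. T v = 0} DIM('b)"
proof -
  obtain L where L: "linear L" and TL: "\<And>y. T (L y) = y"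
    using real_vector.linear_surjective_right_inverse[OF assms] by (auto simp: fun_eq_iff)
  have "inj L" by (metis TL injI)
  have span: "span (L ` Basis) = range L"
    using span_linear_image[OF L, of Basis] by simp
  show ?thesis
    unfolding has_codim_def
  proof (intro exI[of _ "L ` Basis"] conjI)
    show "finite (L ` Basis)" by simp
    show "card (L ` Basis) = DIM('b)"
      using \<open>inj L\<close> by (simp add: card_image inj_on_subset)
    show "independent (L ` Basis)"
      using \<open>inj L\<close> by (intro linear_independent_injective_image[OF L independent_Basis]) (simp add: inj_on_subset)
    show "span (L ` Basis) \<inter> {v. T v = 0} = {0}"
      using TL linear_0[OF L] span by (auto simp: span_zero linear_0[OF T])
    have "v = (v - L (T v)) + L (T v)" "T (v - L (T v)) = 0" for v
      using TL linear_diff[OF T] by simp_all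
    then show "{x + y |x y. x \<in> {v. T v = 0} \<and> y \<in> span (L ` Basis)} = UNIV"
      unfolding span by blast
  qed
qed

lemma closure_image_kernel_dense:
  fixes J :: "'v::real_normed_vector \<Rightarrow> 'y::real_normed_vector"
    and T :: "'v \<Rightarrow> 'b::euclidean_space"
  assumes J: "bounded_linear J" and dense: "closure (range J) = UNIV"
    and B: "bounded_linear B" and BJ: "\<And>v. B (J v) = T v" and T: "linear T" "surj T"
  shows "closure (J ` {v. T v = 0}) = {y. B y = 0}"
proof
  have "closed {y. B y = 0}"
    using B by (intro closed_Collect_eq) (auto intro: linear_continuous_on)
  then show "closure (J ` {v. T v = 0}) \<subseteq> {y. B y = 0}"
    using BJ by (intro closure_minimal) auto
next
  obtain L where L: "linear L" and "T \<circ> L = id"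
    using real_vector.linear_surjective_right_inverse[OF T] by blast
  then have TL: "T (L y) = y" for y
    by (metis comp_apply id_apply)
  define Q where "Q y = y - J (L (B y))" for y
  have "bounded_linear L" using L by (simp add: linear_conv_bounded_linear)
  then have "bounded_linear Q"
    unfolding Q_def
    by (intro bounded_linear_sub bounded_linear_ident bounded_linear_compose[OF J] bounded_linear_compose[OF _ B])
  then have "continuous_on (closure (range J)) Q"
    by (simp add: linear_continuous_on)
  moreover have "Q ` range J \<subseteq> closure (J ` {v. T v = 0})"
  proof -
    have "Q (J v) = J (v - L (T v))" "T (v - L (T v)) = 0" for v
      using BJ TL linear_diff[OF T(1)] linear_diff[OF bounded_linear.linear[OF J]] by (simp_all add: Q_def)
    then show ?thesis using closure_subset by fastforce
  qed
  ultimately have "Q ` closure (range J) \<subseteq> closure (J ` {v. T v = 0})"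
    by (rule image_closure_subset[OF _ closed_closure])
  moreover have "Q y = y" if "B y = 0" for y
    using that by (simp add: Q_def linear_0[OF L] linear_0[OF bounded_linear.linear[OF J]])
  ultimately show "{y. B y = 0} \<subseteq> closure (J ` {v. T v = 0})"
    unfolding dense by (metis (mono_tags, lifting) UNIV_I image_eqI mem_Collect_eq subset_eq)
qed

lemma kernel_dense_extension:
  fixes J :: "'v::real_normed_vector \<Rightarrow> 'y::real_normed_vector"
    and T :: "'v \<Rightarrow> 'b::euclidean_space"
  assumes J: "bounded_linear J" and dense: "closure (range J) = UNIV"
    and B: "bounded_linear B" and BJ: "\<And>v. B (J v) = T v" and T: "linear T" "surj T"
  shows "closure (J ` {v. T v = 0}) = {y. B y = 0}"
    and "has_codim {v. T v = 0} DIM('b)" and "has_codim {y. B y = 0} DIM('b)"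
proof -
  show "closure (J ` {v. T v = 0}) = {y. B y = 0}"
    by (rule closure_image_kernel_dense[OF J dense B BJ T])
  show "has_codim {v. T v = 0} DIM('b)"
    by (rule has_codim_kernel[OF T])
  have "surj B"
  proof (rule surjI)
    show "B (J (inv T y)) = y" for y
      using BJ surj_f_inv_f[OF T(2)] by simp
  qed
  then show "has_codim {y. B y = 0} DIM('b)"
    by (rule has_codim_kernel[OF bounded_linear.linear[OF B]])
qed

section \<open>Tangent spaces\<close>

lemma has_derivative_within_along_line:
  assumes f: "(f has_derivative D) (at x within S)" and \<epsilon>: "\<epsilon> > 0"
    and line: "\<And>t. t \<in> {-\<epsilon><..<\<epsilon>} \<Longrightarrow> x + t *\<^sub>R a \<in> S"
    and v: "((\<lambda>t. f (x + t *\<^sub>R a)) has_vector_derivative v) (at 0)"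
  shows "v = D a"
proof -
  have "((\<lambda>t. x + t *\<^sub>R a) has_derivative (\<lambda>h. h *\<^sub>R a)) (at 0 within {-\<epsilon><..<\<epsilon>})"
    by (auto intro!: derivative_eq_intros)
  moreover have "(f has_derivative D) (at ((\<lambda>t. x + t *\<^sub>R a) 0) within (\<lambda>t. x + t *\<^sub>R a) ` {-\<epsilon><..<\<epsilon>})"
    using has_derivative_subset[OF f] line by (simp add: image_subset_iff)
  ultimately have "((f \<circ> (\<lambda>t. x + t *\<^sub>R a)) has_derivative (D \<circ> (\<lambda>h. h *\<^sub>R a))) (at 0 within {-\<epsilon><..<\<epsilon>})"
    by (rule diff_chain_within)
  then have "((\<lambda>t. f (x + t *\<^sub>R a)) has_derivative (\<lambda>h. D (h *\<^sub>R a))) (at 0 within {-\<epsilon><..<\<epsilon>})"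
    by (simp add: o_def)
  then have "((\<lambda>t. f (x + t *\<^sub>R a)) has_vector_derivative D a) (at 0)"
    using at_within_open[of 0 "{-\<epsilon><..<\<epsilon>}"] \<epsilon> linear_scale[OF has_derivative_linear[OF f]]
    by (simp add: has_vector_derivative_def)
  then show ?thesis using v vector_derivative_unique_at by blast
qed

lemma has_derivative_zero_along_curve:
  assumes g: "(g has_vector_derivative v) (at 0)" and \<epsilon>: "\<epsilon> > 0"
    and zero: "\<And>t. t \<in> {-\<epsilon><..<\<epsilon>} \<Longrightarrow> F (g t) = 0" and F: "(F has_derivative F') (at (g 0))"
  shows "F' v = 0"
proof -
  have chain: "((F \<circ> g) has_derivative (F' \<circ> (\<lambda>h. h *\<^sub>R v))) (at 0)"
    using g F by (simp add: has_vector_derivative_def diff_chain_at)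
  have "((\<lambda>t. 0) has_derivative (\<lambda>h. 0)) (at (0::real))" by (rule has_derivative_const)
  then have "((F \<circ> g) has_derivative (\<lambda>h. 0)) (at 0)"
  proof (rule has_derivative_transform_within_open[where s="{-\<epsilon><..<\<epsilon>}"])
    show "0 = (F \<circ> g) t" if "t \<in> {-\<epsilon><..<\<epsilon>}" for t
      using zero that by simp
  qed (use \<epsilon> in auto)
  then have "F' \<circ> (\<lambda>h. h *\<^sub>R v) = (\<lambda>h. 0)"
    by (rule has_derivative_unique[OF chain])
  then show ?thesis by (metis comp_apply scaleR_one)
qed

lemma tangent_space_subset_kernel:
  assumes G: "(G has_derivative T) (at u)" and M: "\<And>w. w \<in> M \<Longrightarrow> G w = 0"
  shows "tangent_space M \<Omega> u \<subseteq> {v. T v = 0}"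
proof
  fix v assume "v \<in> tangent_space M \<Omega> u"
  then obtain \<epsilon> \<gamma> \<gamma>' where "\<epsilon> > 0"
    and \<gamma>: "\<forall>t\<in>{-\<epsilon><..<\<epsilon>}. (\<gamma> has_vector_derivative \<gamma>' t) (at t)"
    and \<gamma>M: "\<forall>t\<in>{-\<epsilon><..<\<epsilon>}. \<gamma> t \<in> M \<inter> \<Omega>" and "\<gamma> 0 = u" "\<gamma>' 0 = v"
    unfolding tangent_space_def by blast
  then have "T v = 0"
    using \<gamma> \<gamma>M M G by (intro has_derivative_zero_along_curve[of \<gamma> v \<epsilon> G T]) auto
  then show "v \<in> {v. T v = 0}" by simp
qed

lemma graph_derivative_in_tangent_space:
  fixes \<psi> :: "'v::banach \<Rightarrow> 'v"
  assumes \<psi>_an: "analytic_on_within V0 \<Omega>0 \<psi>" and V0: "subspace V0" and \<omega>: "\<omega> \<in> \<Omega>0" and a: "a \<in> V0"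
    and \<phi>: "((\<lambda>w. w + \<psi> w) has_derivative D\<phi>) (at \<omega> within \<Omega>0)"
    and graph: "\<And>w. w \<in> \<Omega>0 \<Longrightarrow> w + \<psi> w \<in> M \<inter> \<Omega>"
    and P: "bounded_linear P" and P\<psi>: "\<And>w. w \<in> \<Omega>0 \<Longrightarrow> P (\<psi> w) = 0"
  shows "D\<phi> a \<in> tangent_space M \<Omega> (\<omega> + \<psi> \<omega>)" and "P (D\<phi> a - a) = 0"
proof -
  obtain \<epsilon> \<gamma>' where \<epsilon>: "\<epsilon> > 0" and line: "\<And>t. t \<in> {-\<epsilon><..<\<epsilon>} \<Longrightarrow> \<omega> + t *\<^sub>R a \<in> \<Omega>0"
    and \<gamma>': "\<And>t. t \<in> {-\<epsilon><..<\<epsilon>} \<Longrightarrow> ((\<lambda>t. \<psi> (\<omega> + t *\<^sub>R a)) has_vector_derivative \<gamma>' t) (at t)"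
    and cont: "continuous_on {-\<epsilon><..<\<epsilon>} \<gamma>'"
    using analytic_on_within_line[OF \<psi>_an V0 \<omega> a] by blast
  have 0: "0 \<in> {-\<epsilon><..<\<epsilon>}" using \<epsilon> by simp
  have curve: "((\<lambda>t. \<omega> + t *\<^sub>R a + \<psi> (\<omega> + t *\<^sub>R a)) has_vector_derivative a + \<gamma>' t) (at t)"
    if "t \<in> {-\<epsilon><..<\<epsilon>}" for t
    using \<gamma>'[OF that] by (auto intro!: derivative_eq_intros)
  have D\<phi>_a: "a + \<gamma>' 0 = D\<phi> a"
    by (rule has_derivative_within_along_line[OF \<phi> \<epsilon> line curve[OF 0]])
  show "D\<phi> a \<in> tangent_space M \<Omega> (\<omega> + \<psi> \<omega>)"
    unfolding tangent_space_def
    using \<epsilon> curve cont graph line D\<phi>_a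
    by (intro CollectI exI[of _ \<epsilon>] exI[of _ "\<lambda>t. \<omega> + t *\<^sub>R a + \<psi> (\<omega> + t *\<^sub>R a)"]
        exI[of _ "\<lambda>t. a + \<gamma>' t"] conjI continuous_on_add continuous_on_const) auto
  have "P (\<gamma>' 0) = 0"
    by (rule has_derivative_zero_along_curve[OF \<gamma>'[OF 0] \<epsilon>, of P])
      (use P\<psi> line bounded_linear_imp_has_derivative[OF P] in auto)
  moreover have "D\<phi> a - a = \<gamma>' 0" using D\<phi>_a by (simp add: algebra_simps)
  ultimately show "P (D\<phi> a - a) = 0" by simp
qed

lemma tangent_space_of_graph:
  fixes \<psi> :: "'v::banach \<Rightarrow> 'v"
  assumes G: "(G has_derivative T) (at (\<omega> + \<psi> \<omega>))" and M: "\<And>w. w \<in> M \<Longrightarrow> G w = 0"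
    and V1: "subspace V1" and T_inj: "inj_on T V1" and sum: "{a + b | a b. a \<in> V0 \<and> b \<in> V1} = UNIV"
    and \<psi>_an: "analytic_on_within V0 \<Omega>0 \<psi>" and V0: "subspace V0" "\<Omega>0 \<subseteq> V0" and \<omega>: "\<omega> \<in> \<Omega>0"
    and graph: "\<And>w. w \<in> \<Omega>0 \<Longrightarrow> w + \<psi> w \<in> M \<inter> \<Omega>" and \<psi>_V1: "\<And>w. w \<in> \<Omega>0 \<Longrightarrow> \<psi> w \<in> V1"
    and P: "bounded_linear P" "\<And>v. P v \<in> V0" "\<And>v. v \<in> V0 \<Longrightarrow> P v = v" "\<And>v. P v = 0 \<longleftrightarrow> v \<in> V1"
  defines "D\<phi> \<equiv> frechet_derivative (\<lambda>w. w + \<psi> w) (at \<omega> within \<Omega>0)"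
  shows "tangent_space M \<Omega> (\<omega> + \<psi> \<omega>) = {v. T v = 0}" and "{v. T v = 0} = D\<phi> ` V0"
proof -
  have "\<psi> differentiable (at \<omega> within \<Omega>0)"
    by (rule analytic_on_within_differentiable[OF \<psi>_an V0 \<omega> P(1-3)])
  then have \<phi>_deriv: "((\<lambda>w. w + \<psi> w) has_derivative D\<phi>) (at \<omega> within \<Omega>0)"
    unfolding D\<phi>_def frechet_derivative_works[symmetric] by (intro differentiable_add differentiable_ident)
  have P\<psi>: "\<And>w. w \<in> \<Omega>0 \<Longrightarrow> P (\<psi> w) = 0" using \<psi>_V1 P(4) by blast
  note graph_deriv = graph_derivative_in_tangent_space[OF \<psi>_an V0(1) \<omega> _ \<phi>_deriv graph P(1) P\<psi>]
  have tangent_ker: "tangent_space M \<Omega> (\<omega> + \<psi> \<omega>) \<subseteq> {v. T v = 0}"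
    by (rule tangent_space_subset_kernel[OF G M])
  have image_tangent: "D\<phi> ` V0 \<subseteq> tangent_space M \<Omega> (\<omega> + \<psi> \<omega>)"
    using graph_deriv(1) by blast
  have "{v. T v = 0} \<subseteq> D\<phi> ` V0"
  proof (rule kernel_subset_image_of_graph_derivative[OF has_derivative_linear[OF G] V1 T_inj sum])
    show "T (D\<phi> a) = 0" if "a \<in> V0" for a
      using tangent_ker image_tangent that by blast
    show "D\<phi> a - a \<in> V1" if "a \<in> V0" for a
      using graph_deriv(2)[OF that] P(4) by blast
  qed
  with tangent_ker image_tangent
  show "tangent_space M \<Omega> (\<omega> + \<psi> \<omega>) = {v. T v = 0}" and "{v. T v = 0} = D\<phi> ` V0"
    by blast+
qed

theorem proposition3p3:
  fixes J :: "'v::banach \<Rightarrow> 'y::banach"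
    and U :: "'v set"
    and G :: "'v \<Rightarrow> real^'m"
    and Gb :: "'v \<Rightarrow> ('y \<Rightarrow>\<^sub>L (real^'m))"
    and ubar :: 'v
    and V1 \<Omega>0 \<Omega>1 :: "'v set"
    and \<psi> :: "'v \<Rightarrow> 'v"
  defines "M \<equiv> {u \<in> U. G u = 0}"
    and "V0 \<equiv> {v. frechet_derivative G (at ubar) v = 0}"
    and "\<Omega> \<equiv> {a + b | a b. a \<in> \<Omega>0 \<and> b \<in> \<Omega>1}"
    and "\<phi> \<equiv> (\<lambda>w. w + \<psi> w)"
  assumes J_bl: "bounded_linear J" and J_inj: "inj J" and J_dense: "closure (range J) = UNIV"
    and U_open: "open U"
    and G_an: "banach_analytic_on U G"
    and Gb_ext: "\<forall>u\<in>U. \<forall>v. blinfun_apply (Gb u) (J v) = frechet_derivative G (at u) v"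
    and Gb_an: "banach_analytic_on U Gb"
    and G_ubar: "ubar \<in> U" "G ubar = 0"
    and G'_surj: "surj (frechet_derivative G (at ubar))"
    and V1_sub: "subspace V1" and V1_closed: "closed V1"
    and dsum: "V0 \<inter> V1 = {0}" "{a + b | a b. a \<in> V0 \<and> b \<in> V1} = UNIV"
    and \<Omega>0_open: "openin (top_of_set V0) \<Omega>0" and \<Omega>0_sub: "\<Omega>0 \<subseteq> V0"
    and \<Omega>1_open: "openin (top_of_set V1) \<Omega>1" and \<Omega>1_sub: "\<Omega>1 \<subseteq> V1"
    and ubar_in: "ubar \<in> \<Omega>" and \<Omega>_sub: "\<Omega> \<subseteq> U"
    and \<psi>_an: "analytic_on_within V0 \<Omega>0 \<psi>"
    and \<psi>_range: "\<psi> ` \<Omega>0 \<subseteq> \<Omega>1"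
    and graph: "M \<inter> \<Omega> = \<phi> ` \<Omega>0"
    and iso: "\<forall>u\<in>\<Omega>. bij_betw (frechet_derivative G (at u)) V1 UNIV"
  shows "\<forall>\<omega>\<in>\<Omega>0. let u = \<phi> \<omega> in
           tangent_space M \<Omega> u = {v. frechet_derivative G (at u) v = 0}
         \<and> {v. frechet_derivative G (at u) v = 0} = frechet_derivative \<phi> (at \<omega> within \<Omega>0) ` V0
         \<and> closure (J ` tangent_space M \<Omega> u) = {y. blinfun_apply (Gb u) y = 0}
         \<and> has_codim (tangent_space M \<Omega> u) CARD('m)
         \<and> has_codim (closure (J ` tangent_space M \<Omega> u)) CARD('m)"
proof -
  have M_zero: "\<And>w. w \<in> M \<Longrightarrow> G w = 0" and M_U: "M \<subseteq> U" using \<open>M \<equiv> _\<close> by auto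
  define T where "T u = frechet_derivative G (at u)" for u
  have G_deriv: "(G has_derivative T u) (at u)" if "u \<in> U" for u
    using banach_analytic_on_differentiable[OF G_an U_open that] by (simp add: T_def frechet_derivative_works)
  have "ubar \<in> U" using ubar_in \<Omega>_sub by blast
  have V0: "V0 = {v. T ubar v = 0}" using \<open>V0 \<equiv> _\<close> by (simp add: T_def)
  obtain P where P: "bounded_linear P" "\<And>v. T ubar (P v) = 0" "\<And>v. T ubar v = 0 \<Longrightarrow> P v = v"
    "\<And>v. P v = 0 \<longleftrightarrow> v \<in> V1"
    using kernel_projection[OF has_derivative_bounded_linear[OF G_deriv[OF \<open>ubar \<in> U\<close>]] V1_sub
          iso[rule_format, OF ubar_in, folded T_def]] by blast
  have "subspace V0"
    unfolding V0 by (rule linear_subspace_kernel[OF has_derivative_linear[OF G_deriv[OF \<open>ubar \<in> U\<close>]]])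
  have \<phi>: "\<phi> = (\<lambda>w. w + \<psi> w)" using \<open>\<phi> \<equiv> _\<close> by simp
  have in_M: "\<And>w. w \<in> \<Omega>0 \<Longrightarrow> w + \<psi> w \<in> M \<inter> \<Omega>" using graph unfolding \<phi> by blast
  have \<psi>_V1: "\<And>w. w \<in> \<Omega>0 \<Longrightarrow> \<psi> w \<in> V1" using \<psi>_range \<Omega>1_sub by blast
  have "tangent_space M \<Omega> (\<phi> \<omega>) = {v. T (\<phi> \<omega>) v = 0}
      \<and> frechet_derivative \<phi> (at \<omega> within \<Omega>0) ` V0 = {v. T (\<phi> \<omega>) v = 0}" if \<omega>: "\<omega> \<in> \<Omega>0" for \<omega>
  proof -
    have "\<omega> + \<psi> \<omega> \<in> U" "inj_on (T (\<omega> + \<psi> \<omega>)) V1"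
      using in_M[OF \<omega>] M_U iso by (auto simp: T_def bij_betw_def)
    from tangent_space_of_graph[OF G_deriv[OF this(1)] M_zero V1_sub this(2) dsum(2) \<psi>_an
        \<open>subspace V0\<close> \<Omega>0_sub \<omega> in_M \<psi>_V1 P(1) _ _ P(4)] P(2,3)
    show ?thesis unfolding \<phi> V0 by simp
  qed
  moreover have "closure (J ` {v. T u v = 0}) = {y. blinfun_apply (Gb u) y = 0}
      \<and> has_codim {v. T u v = 0} CARD('m) \<and> has_codim {y. blinfun_apply (Gb u) y = 0} CARD('m)"
    if "u \<in> \<Omega>" for u
  proof -
    have "u \<in> U" using that \<Omega>_sub by blast
    have T: "linear (T u)" "surj (T u)"
      using has_derivative_linear[OF G_deriv[OF \<open>u \<in> U\<close>]] iso that unfolding T_def bij_betw_def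
      by (metis image_mono subset_UNIV top.extremum_uniqueI)+
    have Gb_T: "\<And>v. blinfun_apply (Gb u) (J v) = T u v" using Gb_ext \<open>u \<in> U\<close> by (simp add: T_def)
    show ?thesis
      using kernel_dense_extension[OF J_bl J_dense blinfun.bounded_linear_right Gb_T T] by simp
  qed
  ultimately show ?thesis
    using in_M by (simp add: Let_def T_def \<phi>)
qed

end
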